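(* Let $D$ be a division ring and $R$ a maximal subring of $D$ which is not a division ring. Then $R$ is an abelian valuation ring for $D$ if and only if $D^c\subseteq R$. In this case $R$ is a duo ring.
   Context: All rings are associative unital and subrings share the identity. A maximal subring of a ring $T$ is a proper subring maximal under inclusion among proper subrings of $T$. $D^c$ denotes the derived (commutator) subgroup of the multiplicative group $D^*=D\setminus\{0\}$, generated by all $aba^{-1}b^{-1}$. A subring $R$ is an abelian valuation ring for $D$ if it is a valuation ring of $D$ (for each $x\in D^*$, $x\in R$ or $x^{-1}\in R$) with $dRd^{-1}=R$ for all $d\in D^*$ and with abelian value group $D^*/U(R)$. A ring is duo if every one-sided ideal is two-sided. *)

theory Defs
  imports Main
begin

definition subring_of :: "'a::ring_1 set \<Rightarrow> bool" where
  "subring_of S \<longleftrightarrow> 0 \<in> S \<and> 1 \<in> S \<and>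
     (\<forall>x\<in>S. \<forall>y\<in>S. x + y \<in> S \<and> x - y \<in> S \<and> x * y \<in> S)"

definition maximal_subring :: "'a::ring_1 set \<Rightarrow> bool" where
  "maximal_subring R \<longleftrightarrow> subring_of R \<and> R \<noteq> UNIV \<and>
     (\<forall>S. subring_of S \<and> S \<noteq> UNIV \<and> R \<subseteq> S \<longrightarrow> S = R)"

definition is_division_subring :: "'a::division_ring set \<Rightarrow> bool" where
  "is_division_subring R \<longleftrightarrow> subring_of R \<and> (\<forall>x\<in>R. x \<noteq> 0 \<longrightarrow> inverse x \<in> R)"

definition units_sub :: "'a::division_ring set \<Rightarrow> 'a set" where
  "units_sub R = {x. x \<in> R \<and> x \<noteq> 0 \<and> inverse x \<in> R}"

inductive_set derived_subgroup :: "'a::division_ring set" where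
  one: "1 \<in> derived_subgroup"
| comm: "a \<noteq> 0 \<Longrightarrow> b \<noteq> 0 \<Longrightarrow> a * b * inverse a * inverse b \<in> derived_subgroup"
| mult: "x \<in> derived_subgroup \<Longrightarrow> y \<in> derived_subgroup \<Longrightarrow> x * y \<in> derived_subgroup"
| inv: "x \<in> derived_subgroup \<Longrightarrow> inverse x \<in> derived_subgroup"

definition valuation_ring :: "'a::division_ring set \<Rightarrow> bool" where
  "valuation_ring R \<longleftrightarrow> subring_of R \<and> (\<forall>x. x \<noteq> 0 \<longrightarrow> x \<in> R \<or> inverse x \<in> R)"

text \<open>Abelian valuation ring: valuation ring, invariant under all inner automorphisms,
  and with abelian value group D^*/U(R): cosets (ab)U(R) and (ba)U(R) coincide.\<close>
definition abelian_valuation_ring :: "'a::division_ring set \<Rightarrow> bool" where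
  "abelian_valuation_ring R \<longleftrightarrow> valuation_ring R \<and>
     (\<forall>d. d \<noteq> 0 \<longrightarrow> (\<lambda>r. d * r * inverse d) ` R = R) \<and>
     (\<forall>a b. a \<noteq> 0 \<longrightarrow> b \<noteq> 0 \<longrightarrow>
        (\<lambda>u. a * b * u) ` units_sub R = (\<lambda>u. b * a * u) ` units_sub R)"

definition left_ideal_of :: "'a::ring_1 set \<Rightarrow> 'a set \<Rightarrow> bool" where
  "left_ideal_of R I \<longleftrightarrow> I \<subseteq> R \<and> 0 \<in> I \<and>
     (\<forall>x\<in>I. \<forall>y\<in>I. x + y \<in> I \<and> x - y \<in> I) \<and> (\<forall>r\<in>R. \<forall>x\<in>I. r * x \<in> I)"

definition right_ideal_of :: "'a::ring_1 set \<Rightarrow> 'a set \<Rightarrow> bool" where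
  "right_ideal_of R I \<longleftrightarrow> I \<subseteq> R \<and> 0 \<in> I \<and>
     (\<forall>x\<in>I. \<forall>y\<in>I. x + y \<in> I \<and> x - y \<in> I) \<and> (\<forall>r\<in>R. \<forall>x\<in>I. x * r \<in> I)"

definition duo_ring :: "'a::ring_1 set \<Rightarrow> bool" where
  "duo_ring R \<longleftrightarrow> (\<forall>I. left_ideal_of R I \<longrightarrow> right_ideal_of R I) \<and>
                    (\<forall>I. right_ideal_of R I \<longrightarrow> left_ideal_of R I)"

end

theory Submission
  imports Defs
begin

text \<open>If \<open>D\<^sup>c \<subseteq> R\<close>, then \<open>R\<close> is invariant under conjugation, since \<open>d r d\<inverse> = [d,r] r\<close>.
  For \<open>y \<notin> R\<close> the left polynomial expressions \<open>\<Sum> r\<^sub>i y\<^sup>i\<close> then form a subring, which by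
  maximality is all of \<open>D\<close>. Fix \<open>a \<in> R\<close> with \<open>a\<inverse> \<notin> R\<close>. Expanding \<open>(1 - ac)\<inverse>\<close> in \<open>R[a\<inverse>]\<close>
  shows that \<open>1 - ac\<close> is a unit of \<open>R\<close> for every \<open>c \<in> R\<close>. If neither \<open>x\<close> nor \<open>x\<inverse>\<close> were in \<open>R\<close>,
  then \<open>a\<inverse>\<close> would be a left polynomial both in \<open>x\<close> and in \<open>x\<inverse>\<close>; the unit property lets one
  lower the degree of the longer of the two expansions, and descent on the sum of the degrees
  gives a contradiction (Kaplansky's argument). So \<open>R\<close> is a valuation ring, and its value group
  is abelian because \<open>ab\<close> and \<open>ba\<close> differ by a commutator. Conversely, in an abelian valuation
  ring \<open>ab = ba u\<close> with \<open>u\<close> a unit, so every commutator is a conjugate of a unit; and conjugation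
  invariance alone makes every one-sided ideal two-sided.\<close>

lemma mult_inverse_cancel_left:
  fixes a :: "'a::division_ring"
  assumes "a \<noteq> 0"
  shows "a * (inverse a * x) = x" "inverse a * (a * x) = x"
  using assms by (simp_all flip: mult.assoc)

lemma one_diff_power_eq_ring_1:
  fixes t :: "'a::ring_1"
  shows "1 - t ^ n = (1 - t) * (\<Sum>i<n. t ^ i)"
  by (induction n) (simp_all add: algebra_simps power_commutes)

lemma inverse_power_mult_power:
  fixes y :: "'a::division_ring"
  assumes "y \<noteq> 0" "i \<le> k"
  shows "inverse y ^ i * y ^ k = y ^ (k - i)"
proof -
  have "y ^ k = y ^ i * y ^ (k - i)" using assms(2) by (simp flip: power_add)
  then show ?thesis using assms(1) by (simp add: power_inverse mult_inverse_cancel_left)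
qed

section \<open>Subrings, units and conjugation invariance\<close>

lemma subring_ofD:
  assumes "subring_of R"
  shows "0 \<in> R" "1 \<in> R"
    "x \<in> R \<Longrightarrow> y \<in> R \<Longrightarrow> x + y \<in> R"
    "x \<in> R \<Longrightarrow> y \<in> R \<Longrightarrow> x - y \<in> R"
    "x \<in> R \<Longrightarrow> y \<in> R \<Longrightarrow> x * y \<in> R"
  using assms unfolding subring_of_def by auto

lemma subring_uminus: "subring_of R \<Longrightarrow> x \<in> R \<Longrightarrow> - x \<in> R"
  using subring_ofD(4)[of R 0 x] subring_ofD(1)[of R] by simp

lemma subring_power: "subring_of R \<Longrightarrow> x \<in> R \<Longrightarrow> x ^ n \<in> R"
  by (induction n) (auto intro: subring_ofD)

lemma subring_sum:
  assumes "subring_of R" "\<And>i. i \<in> A \<Longrightarrow> f i \<in> R"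
  shows "(\<Sum>i\<in>A. f i) \<in> R"
  using assms(2)
  by (induction A rule: infinite_finite_induct) (auto intro: subring_ofD[OF assms(1)])

lemma units_sub_mult:
  "subring_of R \<Longrightarrow> u \<in> units_sub R \<Longrightarrow> v \<in> units_sub R \<Longrightarrow> u * v \<in> units_sub R"
  unfolding units_sub_def by (auto simp: nonzero_inverse_mult_distrib intro: subring_ofD)

lemma units_sub_inverse: "u \<in> units_sub R \<Longrightarrow> inverse u \<in> units_sub R"
  unfolding units_sub_def by auto

definition conj_invariant :: "'a::division_ring set \<Rightarrow> bool" where
  "conj_invariant R \<longleftrightarrow> (\<forall>d r. d \<noteq> 0 \<longrightarrow> r \<in> R \<longrightarrow> d * r * inverse d \<in> R)"

lemma conj_invariantD: "conj_invariant R \<Longrightarrow> d \<noteq> 0 \<Longrightarrow> r \<in> R \<Longrightarrow> d * r * inverse d \<in> R"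
  unfolding conj_invariant_def by blast

lemma conj_invariant_image_eq:
  assumes "conj_invariant R" "d \<noteq> 0"
  shows "(\<lambda>r. d * r * inverse d) ` R = R"
proof
  show "(\<lambda>r. d * r * inverse d) ` R \<subseteq> R"
    using assms by (auto intro: conj_invariantD)
  show "R \<subseteq> (\<lambda>r. d * r * inverse d) ` R"
  proof
    fix r assume "r \<in> R"
    then have "inverse d * r * d \<in> R"
      using conj_invariantD[OF assms(1), of "inverse d"] assms(2) by simp
    moreover have "r = d * (inverse d * r * d) * inverse d"
      using assms(2) by (simp add: mult.assoc mult_inverse_cancel_left)
    ultimately show "r \<in> (\<lambda>r. d * r * inverse d) ` R" by blast
  qed
qed

lemma conj_invariant_move_right:
  assumes "conj_invariant R" "d \<noteq> 0" "r \<in> R"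
  shows "\<exists>s\<in>R. d * r = s * d"
  using conj_invariantD[OF assms] assms(2) by (intro bexI[of _ "d * r * inverse d"]) (simp_all add: mult.assoc)

lemma conj_invariant_move_left:
  assumes "conj_invariant R" "d \<noteq> 0" "r \<in> R"
  shows "\<exists>s\<in>R. r * d = d * s"
proof -
  have "inverse d * r * d \<in> R"
    using conj_invariantD[OF assms(1), of "inverse d"] assms(2,3) by simp
  moreover have "r * d = d * (inverse d * r * d)"
    using assms(2) by (simp add: mult.assoc mult_inverse_cancel_left)
  ultimately show ?thesis by blast
qed

lemma units_sub_conj:
  assumes "conj_invariant R" "d \<noteq> 0" "u \<in> units_sub R"
  shows "d * u * inverse d \<in> units_sub R"
proof -
  have "inverse (d * u * inverse d) = d * inverse u * inverse d"
    using assms(2,3) by (simp add: units_sub_def nonzero_inverse_mult_distrib mult.assoc)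
  then show ?thesis
    using assms by (auto simp: units_sub_def intro: conj_invariantD)
qed

lemma duo_ring_if_conj_invariant:
  assumes "conj_invariant R"
  shows "duo_ring R"
proof -
  have right: "x * r \<in> I" if I: "left_ideal_of R I" and "x \<in> I" "r \<in> R" for I x r
  proof (cases "x = 0")
    case True
    then show ?thesis using I \<open>x \<in> I\<close> by (simp add: left_ideal_of_def)
  next
    case False
    then obtain s where "s \<in> R" "x * r = s * x"
      using conj_invariant_move_right[OF assms] \<open>r \<in> R\<close> by blast
    then show ?thesis using I \<open>x \<in> I\<close> unfolding left_ideal_of_def by simp
  qed
  have left: "r * x \<in> I" if I: "right_ideal_of R I" and "x \<in> I" "r \<in> R" for I x r
  proof (cases "x = 0")
    case True
    then show ?thesis using I \<open>x \<in> I\<close> by (simp add: right_ideal_of_def)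
  next
    case False
    then obtain s where "s \<in> R" "r * x = x * s"
      using conj_invariant_move_left[OF assms] \<open>r \<in> R\<close> by blast
    then show ?thesis using I \<open>x \<in> I\<close> unfolding right_ideal_of_def by simp
  qed
  have "right_ideal_of R I" if "left_ideal_of R I" for I
    using that right[OF that] unfolding left_ideal_of_def right_ideal_of_def by simp
  moreover have "left_ideal_of R I" if "right_ideal_of R I" for I
    using that left[OF that] unfolding left_ideal_of_def right_ideal_of_def by simp
  ultimately show ?thesis unfolding duo_ring_def by blast
qed

section \<open>The derived subgroup\<close>

lemma derived_subgroup_nonzero: "x \<in> derived_subgroup \<Longrightarrow> x \<noteq> 0"
  by (induction rule: derived_subgroup.induct) auto

lemma derived_subgroup_subset_units:
  assumes "derived_subgroup \<subseteq> R"
  shows "derived_subgroup \<subseteq> units_sub R"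
  using assms derived_subgroup.inv derived_subgroup_nonzero unfolding units_sub_def by blast

lemma conj_invariant_if_derived_subgroup_subset:
  assumes R: "subring_of R" and D: "derived_subgroup \<subseteq> R"
  shows "conj_invariant R"
  unfolding conj_invariant_def
proof (intro allI impI)
  fix d r :: 'a assume "d \<noteq> 0" "r \<in> R"
  show "d * r * inverse d \<in> R"
  proof (cases "r = 0")
    case False
    have "(d * r * inverse d * inverse r) * r \<in> R"
      using derived_subgroup.comm[OF \<open>d \<noteq> 0\<close> False] D \<open>r \<in> R\<close> subring_ofD(5)[OF R] by blast
    then show ?thesis
      using False by (simp add: mult.assoc)
  qed (simp add: subring_ofD(1)[OF R])
qed

lemma conj_invariant_if_abelian_valuation_ring:
  "abelian_valuation_ring R \<Longrightarrow> conj_invariant R"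
  unfolding abelian_valuation_ring_def conj_invariant_def by blast

lemma derived_subgroup_subset_if_abelian_valuation_ring:
  fixes R :: "'a::division_ring set"
  assumes avr: "abelian_valuation_ring R"
  shows "derived_subgroup \<subseteq> R"
proof -
  have R: "subring_of R"
    using avr unfolding abelian_valuation_ring_def valuation_ring_def by blast
  have N: "conj_invariant R"
    using avr by (rule conj_invariant_if_abelian_valuation_ring)
  have one_unit: "1 \<in> units_sub R"
    using subring_ofD(2)[OF R] by (simp add: units_sub_def)
  have "x \<in> units_sub R" if "x \<in> derived_subgroup" for x
    using that
  proof (induction rule: derived_subgroup.induct)
    case one
    show ?case by (rule one_unit)
  next
    case (comm a b)
    have "a * b * 1 \<in> (\<lambda>u. b * a * u) ` units_sub R"
      using avr comm one_unit unfolding abelian_valuation_ring_def by blast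
    then obtain u where u: "u \<in> units_sub R" and ab: "a * b = b * a * u"
      by auto
    have "a * b * inverse a * inverse b = b * a * u * inverse (b * a)"
      using comm by (simp add: ab nonzero_inverse_mult_distrib mult.assoc)
    moreover have "b * a * u * inverse (b * a) \<in> units_sub R"
      using units_sub_conj[OF N _ u] comm by simp
    ultimately show ?case by simp
  next
    case (mult x y)
    then show ?case using units_sub_mult[OF R] by blast
  next
    case (inv x)
    then show ?case using units_sub_inverse by blast
  qed
  then show ?thesis unfolding units_sub_def by blast
qed

lemma abelian_valuation_ring_if_derived_subgroup_subset:
  fixes R :: "'a::division_ring set"
  assumes V: "valuation_ring R" and D: "derived_subgroup \<subseteq> R"
  shows "abelian_valuation_ring R"
proof -
  have R: "subring_of R" using V unfolding valuation_ring_def by blast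
  have "(\<lambda>u. a * b * u) ` units_sub R \<subseteq> (\<lambda>u. b * a * u) ` units_sub R"
    if "a \<noteq> 0" "b \<noteq> 0" for a b :: 'a
  proof
    fix z assume "z \<in> (\<lambda>u. a * b * u) ` units_sub R"
    then obtain u where u: "u \<in> units_sub R" and z: "z = a * b * u" by blast
    define c where "c = inverse a * inverse b * inverse (inverse a) * inverse (inverse b)"
    have "c \<in> units_sub R"
      using derived_subgroup.comm[of "inverse a" "inverse b"] derived_subgroup_subset_units[OF D] that
      unfolding c_def by auto
    then have "c * u \<in> units_sub R" using units_sub_mult[OF R] u by blast
    moreover have "z = b * a * (c * u)"
      using that by (simp add: z c_def mult.assoc mult_inverse_cancel_left)
    ultimately show "z \<in> (\<lambda>u. b * a * u) ` units_sub R" by blast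
  qed
  then show ?thesis
    unfolding abelian_valuation_ring_def
    using V conj_invariant_image_eq[OF conj_invariant_if_derived_subgroup_subset[OF R D]]
    by (simp add: subset_antisym)
qed

section \<open>Polynomial expressions over a conjugation invariant subring\<close>

definition left_polys :: "'a::ring_1 set \<Rightarrow> 'a \<Rightarrow> nat \<Rightarrow> 'a set" where
  "left_polys R y n = {\<Sum>i<n. f i * y ^ i | f. \<forall>i. f i \<in> R}"

definition adjoin :: "'a::ring_1 set \<Rightarrow> 'a \<Rightarrow> 'a set" where
  "adjoin R y = (\<Union>n. left_polys R y n)"

lemma left_polysI: "(\<And>i. f i \<in> R) \<Longrightarrow> p = (\<Sum>i<n. f i * y ^ i) \<Longrightarrow> p \<in> left_polys R y n"
  unfolding left_polys_def by blast

lemma left_polysE: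
  assumes "p \<in> left_polys R y n"
  obtains f where "\<And>i. f i \<in> R" "p = (\<Sum>i<n. f i * y ^ i)"
  using assms unfolding left_polys_def by blast

lemma left_polys_0: "left_polys R y 0 \<subseteq> {0}"
  by (auto elim: left_polysE)

lemma left_polys_zero: "subring_of R \<Longrightarrow> 0 \<in> left_polys R y n"
  by (rule left_polysI[of "\<lambda>_. 0"]) (simp_all add: subring_ofD(1))

lemma left_polys_add:
  assumes R: "subring_of R" and "p \<in> left_polys R y n" "q \<in> left_polys R y n"
  shows "p + q \<in> left_polys R y n"
proof -
  obtain f where f: "\<And>i. f i \<in> R" "p = (\<Sum>i<n. f i * y ^ i)"
    using assms(2) by (rule left_polysE) (rule that)
  obtain g where g: "\<And>i. g i \<in> R" "q = (\<Sum>i<n. g i * y ^ i)"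
    using assms(3) by (rule left_polysE) (rule that)
  show ?thesis
  proof (rule left_polysI[of "\<lambda>i. f i + g i"])
    show "f i + g i \<in> R" for i using f(1) g(1) by (rule subring_ofD(3)[OF R])
    show "p + q = (\<Sum>i<n. (f i + g i) * y ^ i)"
      by (simp add: f(2) g(2) sum.distrib distrib_right)
  qed
qed

lemma left_polys_uminus:
  assumes R: "subring_of R" and "p \<in> left_polys R y n"
  shows "- p \<in> left_polys R y n"
proof -
  obtain f where f: "\<And>i. f i \<in> R" "p = (\<Sum>i<n. f i * y ^ i)"
    using assms(2) by (rule left_polysE) (rule that)
  show ?thesis
  proof (rule left_polysI[of "\<lambda>i. - f i"])
    show "- f i \<in> R" for i using f(1) by (rule subring_uminus[OF R])
    show "- p = (\<Sum>i<n. - f i * y ^ i)" by (simp add: f(2) sum_negf)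
  qed
qed

lemma left_polys_monom:
  assumes R: "subring_of R" and "r \<in> R" "k < n"
  shows "r * y ^ k \<in> left_polys R y n"
proof (rule left_polysI[of "\<lambda>i. if i = k then r else 0"])
  show "(if i = k then r else 0) \<in> R" for i using assms(2) subring_ofD(1)[OF R] by simp
  have "(\<Sum>i<n. (if i = k then r else 0) * y ^ i) = (\<Sum>i<n. if i = k then r * y ^ k else 0)"
    by (intro sum.cong) auto
  then show "r * y ^ k = (\<Sum>i<n. (if i = k then r else 0) * y ^ i)"
    using assms(3) by simp
qed

lemma left_polys_mono:
  assumes R: "subring_of R" and "n \<le> m"
  shows "left_polys R y n \<subseteq> left_polys R y m"
proof
  fix p assume "p \<in> left_polys R y n"
  then obtain f where f: "\<And>i. f i \<in> R" "p = (\<Sum>i<n. f i * y ^ i)"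
    by (rule left_polysE) (rule that)
  show "p \<in> left_polys R y m"
  proof (rule left_polysI[of "\<lambda>i. if i < n then f i else 0"])
    show "(if i < n then f i else 0) \<in> R" for i using f(1) subring_ofD(1)[OF R] by simp
    have "(\<Sum>i<m. (if i < n then f i else 0) * y ^ i) = (\<Sum>i\<in>{..<m} \<inter> {..<n}. f i * y ^ i)"
      by (simp add: sum.inter_restrict if_distrib[of "\<lambda>c. c * _"] lessThan_def cong: if_cong)
    also have "{..<m} \<inter> {..<n} = {..<n}" using assms(2) by auto
    finally show "p = (\<Sum>i<m. (if i < n then f i else 0) * y ^ i)" by (simp add: f(2))
  qed
qed

lemma left_polys_sum:
  assumes "subring_of R" "\<And>j. j \<in> A \<Longrightarrow> p j \<in> left_polys R y n"
  shows "(\<Sum>j\<in>A. p j) \<in> left_polys R y n"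
  using assms(2)
  by (induction A rule: infinite_finite_induct)
    (auto intro: left_polys_add[OF assms(1)] left_polys_zero[OF assms(1)])

lemma left_polys_mult:
  assumes R: "subring_of R" and N: "conj_invariant R" and y: "y \<noteq> 0"
    and p: "p \<in> left_polys R y n" and q: "q \<in> left_polys R y m"
  shows "p * q \<in> left_polys R y (n + m)"
proof -
  obtain f where f: "\<And>i. f i \<in> R" "p = (\<Sum>i<n. f i * y ^ i)"
    using p by (rule left_polysE) (rule that)
  obtain g where g: "\<And>j. g j \<in> R" "q = (\<Sum>j<m. g j * y ^ j)"
    using q by (rule left_polysE) (rule that)
  have pq: "p * q = (\<Sum>i<n. \<Sum>j<m. f i * (y ^ i * g j) * y ^ j)"
    by (simp only: f(2) g(2) sum_distrib_right) (simp add: sum_distrib_left mult.assoc)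
  have "f i * (y ^ i * g j) * y ^ j \<in> left_polys R y (n + m)" if "i < n" "j < m" for i j
  proof -
    obtain s where s: "s \<in> R" "y ^ i * g j = s * y ^ i"
      using conj_invariant_move_right[OF N _ g(1)[of j], of "y ^ i"] y by auto
    have "f i * (y ^ i * g j) * y ^ j = (f i * s) * y ^ (i + j)"
      by (simp add: s(2) power_add mult.assoc)
    then show ?thesis
      using left_polys_monom[OF R subring_ofD(5)[OF R f(1) s(1)]] that by simp
  qed
  then show ?thesis
    unfolding pq by (auto intro!: left_polys_sum[OF R])
qed

lemma adjoin_subring:
  assumes R: "subring_of R" and N: "conj_invariant R" and y: "y \<noteq> 0"
  shows "subring_of (adjoin R y)" "R \<subseteq> adjoin R y" "y \<in> adjoin R y"
proof -
  have monom: "r * y ^ k \<in> adjoin R y" if "r \<in> R" for r k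
    using left_polys_monom[OF R that, of k "Suc k" y] unfolding adjoin_def by blast
  show "R \<subseteq> adjoin R y" using monom[of _ 0] by auto
  show "y \<in> adjoin R y" using monom[OF subring_ofD(2)[OF R], of 1] by simp
  have common_degree: "\<exists>k. p \<in> left_polys R y k \<and> q \<in> left_polys R y k"
    if p: "p \<in> adjoin R y" and q: "q \<in> adjoin R y" for p q
  proof -
    obtain n m where "p \<in> left_polys R y n" "q \<in> left_polys R y m"
      using p q unfolding adjoin_def by blast
    then show ?thesis
      using left_polys_mono[OF R, of n "n + m" y] left_polys_mono[OF R, of m "n + m" y] by auto
  qed
  have "p + q \<in> adjoin R y" "p - q \<in> adjoin R y" "p * q \<in> adjoin R y"
    if pq: "p \<in> adjoin R y" "q \<in> adjoin R y" for p q
  proof -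
    obtain k where k: "p \<in> left_polys R y k" "q \<in> left_polys R y k"
      using common_degree[OF pq] by blast
    show "p + q \<in> adjoin R y" "p - q \<in> adjoin R y"
      using left_polys_add[OF R k] left_polys_add[OF R k(1) left_polys_uminus[OF R k(2)]]
      unfolding adjoin_def by auto
    show "p * q \<in> adjoin R y"
      using left_polys_mult[OF R N y k] unfolding adjoin_def by blast
  qed
  then show "subring_of (adjoin R y)"
    unfolding subring_of_def using monom[OF subring_ofD(1)[OF R], of 0] monom[OF subring_ofD(2)[OF R], of 0]
    by simp
qed

lemma adjoin_eq_UNIV:
  assumes M: "maximal_subring R" and N: "conj_invariant R" and y: "y \<notin> R"
  shows "adjoin R y = UNIV"
proof -
  have R: "subring_of R" using M unfolding maximal_subring_def by blast
  then have "y \<noteq> 0" using y subring_ofD(1) by blast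
  then show ?thesis
    using M adjoin_subring[OF R N] y unfolding maximal_subring_def by blast
qed

section \<open>Maximal conjugation invariant subrings are valuation rings\<close>

lemma left_polys_inverse_mult_power:
  fixes R :: "'a::division_ring set"
  assumes R: "subring_of R" and a: "a \<in> R" "a \<noteq> 0" and p: "p \<in> left_polys R (inverse a) k"
  shows "p * a ^ k \<in> R"
proof -
  obtain f where f: "\<And>i. f i \<in> R" "p = (\<Sum>i<k. f i * inverse a ^ i)"
    using p by (rule left_polysE) (rule that)
  have "p * a ^ k = (\<Sum>i<k. f i * a ^ (k - i))"
    unfolding f(2) sum_distrib_right
    by (intro sum.cong refl) (simp add: mult.assoc inverse_power_mult_power[OF a(2)])
  also have "\<dots> \<in> R"
    using f(1) subring_power[OF R a(1)] by (auto intro: subring_sum[OF R] subring_ofD(5)[OF R])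
  finally show ?thesis .
qed

lemma conj_invariant_power_mult:
  assumes R: "subring_of R" and N: "conj_invariant R" and a: "a \<noteq> 0" and c: "c \<in> R"
  shows "\<exists>h\<in>R. (a * c) ^ j = a ^ j * h"
proof (induction j)
  case 0
  show ?case using subring_ofD(2)[OF R] by auto
next
  case (Suc j)
  then obtain h where h: "h \<in> R" "(a * c) ^ j = a ^ j * h" by blast
  obtain s where s: "s \<in> R" "h * a = a * s"
    using conj_invariant_move_left[OF N a h(1)] by blast
  have "(a * c) ^ Suc j = a ^ j * (h * a) * c"
    by (simp only: power_Suc2 h(2) mult.assoc)
  also have "\<dots> = a ^ Suc j * (s * c)"
    by (simp only: s(2) power_Suc2 mult.assoc)
  finally show ?case using subring_ofD(5)[OF R s(1) c] by blast
qed

text \<open>Write \<open>u\<inverse> = e a\<^sup>-\<^sup>k\<close> in \<open>R[a\<inverse>] = D\<close>; then \<open>a\<^sup>k = u e\<close>, while \<open>(ac)\<^sup>k \<in> a\<^sup>k R\<close> and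
  \<open>1 - (ac)\<^sup>k \<in> u R\<close>, so \<open>1 \<in> u R\<close>.\<close>

lemma one_diff_mult_in_units:
  assumes M: "maximal_subring R" and N: "conj_invariant R"
    and a: "a \<in> R" "inverse a \<notin> R" and c: "c \<in> R"
  shows "1 - a * c \<in> units_sub R"
proof -
  have R: "subring_of R" using M unfolding maximal_subring_def by blast
  have a0: "a \<noteq> 0" using a(2) subring_ofD(1)[OF R] by auto
  define u where "u = 1 - a * c"
  have u: "u \<in> R" unfolding u_def using a(1) c subring_ofD(2,4,5)[OF R] by blast
  have u0: "u \<noteq> 0"
  proof
    assume "u = 0"
    then have "inverse a = c" unfolding u_def by (simp add: inverse_unique)
    then show False using a(2) c by simp
  qed
  obtain k where "inverse u \<in> left_polys R (inverse a) k"
    using adjoin_eq_UNIV[OF M N a(2)] unfolding adjoin_def by blast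
  then have e: "inverse u * a ^ k \<in> R"
    using left_polys_inverse_mult_power[OF R a(1) a0] by blast
  obtain h where h: "h \<in> R" "(a * c) ^ k = a ^ k * h"
    using conj_invariant_power_mult[OF R N a0 c] by blast
  define s where "s = (\<Sum>i<k. (a * c) ^ i)"
  have s: "s \<in> R"
    unfolding s_def using subring_power[OF R subring_ofD(5)[OF R a(1) c]] by (rule subring_sum[OF R])
  have "1 = (1 - (a * c) ^ k) + a ^ k * h" by (simp add: h(2))
  also have "1 - (a * c) ^ k = u * s"
    unfolding u_def s_def by (rule one_diff_power_eq_ring_1)
  also have "a ^ k * h = u * (inverse u * a ^ k * h)"
    using u0 by (simp add: mult.assoc mult_inverse_cancel_left)
  finally have "inverse u = s + inverse u * a ^ k * h"
    by (simp add: distrib_left inverse_unique)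
  also have "\<dots> \<in> R"
    by (rule subring_ofD(3)[OF R s subring_ofD(5)[OF R e h(1)]])
  finally show ?thesis using u u0 unfolding units_sub_def u_def by blast
qed

lemma inverse_in_left_polys_lower_degree:
  fixes R :: "'a::division_ring set"
  assumes R: "subring_of R" and a: "a \<in> R" "a \<noteq> 0"
    and J: "\<And>c. c \<in> R \<Longrightarrow> 1 - a * c \<in> units_sub R" and y: "y \<noteq> 0" and "m \<le> n"
    and in_y: "inverse a \<in> left_polys R y (Suc n)"
    and in_inverse_y: "inverse a \<in> left_polys R (inverse y) (Suc m)"
  shows "inverse a \<in> left_polys R y n"
proof -
  obtain f where f: "\<And>i. f i \<in> R" "inverse a = (\<Sum>i<Suc n. f i * y ^ i)"
    using in_y by (rule left_polysE) (rule that)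
  obtain g where g: "\<And>j. g j \<in> R" "inverse a = (\<Sum>j<Suc m. g j * inverse y ^ j)"
    using in_inverse_y by (rule left_polysE) (rule that)
  \<comment> \<open>Solving the expansion in \<open>y\<inverse>\<close> for its unit constant term \<open>1 - a g\<^sub>0\<close> expresses \<open>y\<^sup>n\<close>
    through \<open>y\<^sup>n\<^sup>-\<^sup>1, \<dots>, y\<^sup>n\<^sup>-\<^sup>m\<close>; substituting this into the leading term lowers the degree.\<close>
  define w where "w = inverse (1 - a * g 0)"
  have w: "w \<in> R" "w * (1 - a * g 0) = 1"
    using J[of "g 0"] g(1) unfolding w_def units_sub_def by auto
  have "inverse a = g 0 + (\<Sum>j<m. g (Suc j) * inverse y ^ Suc j)"
    using g(2) by (simp only: sum.lessThan_Suc_shift power_0 mult_1_right)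
  then have "1 - a * g 0 = a * (\<Sum>j<m. g (Suc j) * inverse y ^ Suc j)"
    using right_inverse[OF a(2)] by (simp add: algebra_simps)
  moreover have "y ^ n = w * (1 - a * g 0) * y ^ n"
    using w(2) by simp
  ultimately have "y ^ n = w * (a * (\<Sum>j<m. g (Suc j) * inverse y ^ Suc j)) * y ^ n"
    by simp
  also have "\<dots> = (\<Sum>j<m. w * a * g (Suc j) * (inverse y ^ Suc j * y ^ n))"
    by (simp add: sum_distrib_left sum_distrib_right mult.assoc)
  also have "\<dots> = (\<Sum>j<m. w * a * g (Suc j) * y ^ (n - Suc j))"
  proof (intro sum.cong refl)
    fix j assume "j \<in> {..<m}"
    then have "Suc j \<le> n" using \<open>m \<le> n\<close> by simp
    then show "w * a * g (Suc j) * (inverse y ^ Suc j * y ^ n) = w * a * g (Suc j) * y ^ (n - Suc j)"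
      by (simp only: inverse_power_mult_power[OF y])
  qed
  finally have "f n * y ^ n = (\<Sum>j<m. f n * w * a * g (Suc j) * y ^ (n - Suc j))"
    by (simp add: sum_distrib_left mult.assoc)
  also have "\<dots> \<in> left_polys R y n"
    using \<open>m \<le> n\<close> f(1) g(1) w(1) a(1)
    by (intro left_polys_sum[OF R] left_polys_monom[OF R]) (auto intro!: subring_ofD(5)[OF R])
  moreover have "(\<Sum>i<n. f i * y ^ i) \<in> left_polys R y n"
    using f(1) by (rule left_polysI) simp
  ultimately show ?thesis
    using f(2) left_polys_add[OF R] by (simp add: add.commute)
qed

lemma inverse_not_in_left_polys_both:
  fixes R :: "'a::division_ring set"
  assumes R: "subring_of R" and a: "a \<in> R" "a \<noteq> 0"
    and J: "\<And>c. c \<in> R \<Longrightarrow> 1 - a * c \<in> units_sub R" and y: "y \<noteq> 0"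
  shows "inverse a \<notin> left_polys R y n \<or> inverse a \<notin> left_polys R (inverse y) m"
proof (induction "n + m" arbitrary: n m rule: less_induct)
  case less
  show ?case
  proof (rule ccontr)
    assume "\<not> ?case"
    then have in_y: "inverse a \<in> left_polys R y n"
      and in_inverse_y: "inverse a \<in> left_polys R (inverse y) m" by blast+
    have "inverse a \<notin> left_polys R z 0" for z
      using left_polys_0[of R z] a(2) by auto
    then have "n \<noteq> 0" "m \<noteq> 0"
      using in_y in_inverse_y by metis+
    then obtain n' m' where n: "n = Suc n'" and m: "m = Suc m'"
      using not0_implies_Suc by blast
    consider "m' \<le> n'" | "n' \<le> m'" by linarith
    then show False
    proof cases
      case 1
      then have "inverse a \<in> left_polys R y n'"
        using inverse_in_left_polys_lower_degree[OF R a J y] in_y in_inverse_y n m by blast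
      then show False using less[of n' m] in_inverse_y n by simp
    next
      case 2
      then have "inverse a \<in> left_polys R (inverse y) m'"
        using inverse_in_left_polys_lower_degree[OF R a J, of "inverse y"] y in_y in_inverse_y n m
        by simp
      then show False using less[of n m'] in_y m by simp
    qed
  qed
qed

lemma valuation_ring_if_maximal_conj_invariant:
  assumes M: "maximal_subring R" and N: "conj_invariant R" and "\<not> is_division_subring R"
  shows "valuation_ring R"
proof -
  have R: "subring_of R" using M unfolding maximal_subring_def by blast
  obtain a where a: "a \<in> R" "a \<noteq> 0" "inverse a \<notin> R"
    using assms(3) R unfolding is_division_subring_def by blast
  have inverse_a_poly: "\<exists>n. inverse a \<in> left_polys R y n" if "y \<notin> R" for y
    using adjoin_eq_UNIV[OF M N that] unfolding adjoin_def by blast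
  have "x \<in> R \<or> inverse x \<in> R" if "x \<noteq> 0" for x
    using inverse_a_poly[of x] inverse_a_poly[of "inverse x"]
      inverse_not_in_left_polys_both[OF R a(1,2) one_diff_mult_in_units[OF M N a(1,3)] that]
    by blast
  then show ?thesis unfolding valuation_ring_def using R by blast
qed

theorem proposition3p4:
  fixes R :: "'a::division_ring set"
  assumes "maximal_subring R"
    and "\<not> is_division_subring R"
  shows "(abelian_valuation_ring R \<longleftrightarrow> derived_subgroup \<subseteq> R) \<and>
         (abelian_valuation_ring R \<longrightarrow> duo_ring R)"
proof -
  have R: "subring_of R" using assms(1) unfolding maximal_subring_def by blast
  have "abelian_valuation_ring R" if D: "derived_subgroup \<subseteq> R"
  proof -
    have "conj_invariant R" using conj_invariant_if_derived_subgroup_subset[OF R D] .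
    then have "valuation_ring R" using valuation_ring_if_maximal_conj_invariant assms by blast
    then show ?thesis using abelian_valuation_ring_if_derived_subgroup_subset D by blast
  qed
  then show ?thesis
    using derived_subgroup_subset_if_abelian_valuation_ring
      conj_invariant_if_abelian_valuation_ring duo_ring_if_conj_invariant
    by blast
qed

end
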